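(* Under the setting in the context, assume $\sigma_A>0$ and $S^2\ge M_iR_i/p_i^2$ for all $i$. Choose, for all $t$, $\alpha_t=\beta_t=\rho$ with $\rho=\sqrt{\sigma_A}\,S^{-1}$, and $A_t=\sigma_A^{-1}B_t=(1-\rho)^{-t}$ (so $A_0=1$, $B_0=\sigma_A$). Then the condition $1-\frac{\alpha_tR_i}{p_i}\ge0$ holds for all $i,t$, and the generalized APCG iterates satisfy $$\sigma_A\,\mathbb{E}\big[\|v_t-\theta^\star\|^2_{A^\dagger A}\big]+2\big[\mathbb{E}[F(x_t)]-F(\theta^\star)\big]\le C_0(1-\rho)^t,$$ with $C_0=B_0\|v_0-\theta^\star\|^2+2A_0[F(x_0)-F(\theta^\star)]$.
   Context: Setting. Minimize $F(x)=f_A(x)+\sum_{i=1}^d\psi_i(x^{(i)})$ over $\mathbb{R}^d$; $\theta^\star$ a minimizer. $A$ is a matrix with $d$ columns, $A^\dagger$ its pseudo-inverse, $\|u\|^2_{A^\dagger A}=u^TA^\dagger Au$, $e_i$ unit vectors, $x^{(i)}=e_i^Tx$, $R_i=e_i^TA^\dagger Ae_i$. Each $\psi_i$ is convex; $f_A$ is differentiable with $f_A(x)-f_A(y)\ge\nabla f_A(y)^TA^\dagger A(x-y)+\frac{\sigma_A}{2}(x-y)^TA^\dagger A(x-y)$ for all $x,y$; $\nabla_if_A=e_ie_i^T\nabla f_A$; $f_A$ is $M_i$-smooth in direction $i$; for every $i$ either $R_i=1$ or $\psi_i=0$; sampling probabilities $p_i>0$ sum to $1$. Generalized APCG with sequences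 $(\alpha_t,\beta_t,A_t,B_t)$, $a_{t+1}=A_{t+1}-A_t$, $\eta_{i,t}=\frac{a_{t+1}}{B_{t+1}p_i}$: $x_0=v_0=0$; for each $t$: $y_t=\frac{(1-\alpha_t)x_t+\alpha_t(1-\beta_t)v_t}{1-\alpha_t\beta_t}$; sample $i$ w.p. $p_i$ independently; $z_{t+1}=v_{t+1}=(1-\beta_t)v_t+\beta_ty_t-\eta_{i,t}\nabla_if_A(y_t)$; replace $v_{t+1}^{(i)}={\rm prox}_{\eta_{i,t}\psi_i}(z_{t+1}^{(i)})$ where ${\rm prox}_{\eta\psi}(x)=\arg\min_v\frac{1}{2\eta}\|v-x\|^2+\psi(v)$; $x_{t+1}=y_t+\frac{\alpha_tR_i}{p_i}(v_{t+1}-(1-\beta_t)v_t-\beta_ty_t)$. *)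

theory Defs
  imports "HOL-Analysis.Analysis"
begin

text \<open>Moore--Penrose pseudo-inverse of a real matrix with columns indexed by 'd,
  defined by the four Penrose conditions (it exists and is unique).\<close>
definition pinv :: "real^'d^'m \<Rightarrow> real^'m^'d" where
  "pinv A = (THE X. A ** X ** A = A \<and> X ** A ** X = X \<and>
                    transpose (A ** X) = A ** X \<and> transpose (X ** A) = X ** A)"

definition projA :: "real^'d^'m \<Rightarrow> real^'d^'d" where
  "projA A = pinv A ** A"

definition sqnormA :: "real^'d^'m \<Rightarrow> real^'d \<Rightarrow> real" where
  "sqnormA A u = u \<bullet> (projA A *v u)"

definition Rcoef :: "real^'d^'m \<Rightarrow> 'd \<Rightarrow> real" where
  "Rcoef A i = axis i 1 \<bullet> (projA A *v axis i 1)"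

definition Fobj :: "(real^'d \<Rightarrow> real) \<Rightarrow> ('d::finite \<Rightarrow> real \<Rightarrow> real) \<Rightarrow> real^'d \<Rightarrow> real" where
  "Fobj f psi x = f x + (\<Sum>i\<in>UNIV. psi i (x $ i))"

definition prox :: "real \<Rightarrow> (real \<Rightarrow> real) \<Rightarrow> real \<Rightarrow> real" where
  "prox eta psi x = (THE v. \<forall>u. 1/(2*eta) * (v - x)^2 + psi v \<le> 1/(2*eta) * (u - x)^2 + psi u)"

definition coord_grad :: "(real^'d \<Rightarrow> real^'d) \<Rightarrow> 'd \<Rightarrow> real^'d \<Rightarrow> real^'d" where
  "coord_grad g i y = (g y $ i) *\<^sub>R axis i 1"

definition apcg_step ::
  "real^'d^'m \<Rightarrow> (real^'d \<Rightarrow> real^'d) \<Rightarrow> ('d \<Rightarrow> real \<Rightarrow> real) \<Rightarrow> ('d \<Rightarrow> real) \<Rightarrow>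
   (nat \<Rightarrow> real) \<Rightarrow> (nat \<Rightarrow> real) \<Rightarrow> (nat \<Rightarrow> real) \<Rightarrow> (nat \<Rightarrow> real) \<Rightarrow>
   nat \<Rightarrow> 'd \<Rightarrow> (real^'d) \<times> (real^'d) \<Rightarrow> (real^'d) \<times> (real^'d)" where
  "apcg_step A g psi p alpha beta As Bs t i xv =
     (let x = fst xv; v = snd xv;
          y = (1 / (1 - alpha t * beta t)) *\<^sub>R
                ((1 - alpha t) *\<^sub>R x + (alpha t * (1 - beta t)) *\<^sub>R v);
          eta = (As (Suc t) - As t) / (Bs (Suc t) * p i);
          z = (1 - beta t) *\<^sub>R v + beta t *\<^sub>R y - eta *\<^sub>R coord_grad g i y;
          v' = (\<chi> j. if j = i then prox eta (psi i) (z $ i) else z $ j);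
          x' = y + (alpha t * Rcoef A i / p i) *\<^sub>R (v' - (1 - beta t) *\<^sub>R v - beta t *\<^sub>R y)
      in (x', v'))"

fun apcg_run ::
  "real^'d^'m \<Rightarrow> (real^'d \<Rightarrow> real^'d) \<Rightarrow> ('d \<Rightarrow> real \<Rightarrow> real) \<Rightarrow> ('d \<Rightarrow> real) \<Rightarrow>
   (nat \<Rightarrow> real) \<Rightarrow> (nat \<Rightarrow> real) \<Rightarrow> (nat \<Rightarrow> real) \<Rightarrow> (nat \<Rightarrow> real) \<Rightarrow>
   nat \<Rightarrow> (real^'d) \<times> (real^'d) \<Rightarrow> 'd list \<Rightarrow> (real^'d) \<times> (real^'d)" where
  "apcg_run A g psi p alpha beta As Bs t xv [] = xv"
| "apcg_run A g psi p alpha beta As Bs t xv (i # is) =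
     apcg_run A g psi p alpha beta As Bs (Suc t) (apcg_step A g psi p alpha beta As Bs t i xv) is"

definition apcg_iter where
  "apcg_iter A g psi p alpha beta As Bs is = apcg_run A g psi p alpha beta As Bs 0 (0, 0) is"

text \<open>Expectation of a function of the sample path of length t, under i.i.d. sampling
  of coordinates with probabilities p.\<close>
definition expect_path :: "('d::finite \<Rightarrow> real) \<Rightarrow> nat \<Rightarrow> ('d list \<Rightarrow> real) \<Rightarrow> real" where
  "expect_path p t h = (\<Sum>is\<in>{is. length is = t}. prod_list (map p is) * h is)"

end

(* The estimate comes from a Lyapunov function for the augmented state (x, v, h), where h_j is
   the psi-hat surrogate of the APCG analysis: an upper bound for psi_j (x_j), updated by the
   same affine combination of x_j, v_j and the new v_j that produces the new x_j.  For
   alpha = beta = rho and A_t = B_t / sigma = (1 - rho)^-t the step does not depend on t, and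
     L (x, v, h) = sigma ||v - theta||^2_{A^dagger A} + 2 (f x + sum_j h_j - F theta)
   decreases in expectation by the factor 1 - rho in every step.  This combines relative strong
   convexity of f at y (towards x and towards theta), the coordinate descent bound given by
   M_i-smoothness, the optimality condition of the proximal step and convexity of psi_j; the
   choice rho^2 M_i R_i <= sigma p_i^2 makes the second-order terms harmless.  Iterating over
   the sample paths gives the decay (1 - rho)^t, and L dominates the quantity in the theorem
   because psi_j (x_j) <= h_j.  The condition rho R_i <= p_i follows from sigma R_i <= M_i,
   which relative strong convexity and coordinate smoothness force. *)

theory Submission
  imports Defs
begin

section \<open>Orthogonal projections and the Moore--Penrose inverse\<close>

definition orth_proj :: "'a::euclidean_space set \<Rightarrow> 'a \<Rightarrow> 'a" where
  "orth_proj V x = (SOME y. y \<in> V \<and> (\<forall>w\<in>V. (x - y) \<bullet> w = 0))"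

context
  fixes V :: "'a::euclidean_space set"
  assumes V: "subspace V"
begin

lemma orth_proj_exists: "\<exists>y. y \<in> V \<and> (\<forall>w\<in>V. (x - y) \<bullet> w = 0)"
proof -
  obtain y z where "y \<in> span V" "\<And>w. w \<in> span V \<Longrightarrow> orthogonal z w" "x = y + z"
    using orthogonal_subspace_decomp_exists[of V x] by blast
  moreover have "span V = V" using V by simp
  ultimately show ?thesis by (intro exI[of _ y]) (auto simp: orthogonal_def)
qed

lemma orth_proj_in: "orth_proj V x \<in> V"
  and orth_proj_orthogonal: "w \<in> V \<Longrightarrow> (x - orth_proj V x) \<bullet> w = 0"
  using someI_ex[OF orth_proj_exists[of x]] unfolding orth_proj_def[symmetric] by auto

lemma orth_proj_unique:
  assumes "y \<in> V" and "\<And>w. w \<in> V \<Longrightarrow> (x - y) \<bullet> w = 0"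
  shows "orth_proj V x = y"
proof -
  let ?d = "orth_proj V x - y"
  have "?d \<in> V" using assms(1) orth_proj_in V by (simp add: subspace_diff)
  then have "?d \<bullet> ?d = (x - y) \<bullet> ?d - (x - orth_proj V x) \<bullet> ?d"
    by (simp add: inner_diff_left)
  also have "\<dots> = 0" using assms(2) orth_proj_orthogonal \<open>?d \<in> V\<close> by simp
  finally show ?thesis by simp
qed

lemma orth_proj_id: "x \<in> V \<Longrightarrow> orth_proj V x = x"
  by (rule orth_proj_unique) auto

lemma linear_orth_proj: "linear (orth_proj V)"
proof
  fix x z
  show "orth_proj V (x + z) = orth_proj V x + orth_proj V z"
    using orth_proj_orthogonal[of _ x] orth_proj_orthogonal[of _ z]
    by (intro orth_proj_unique)
      (auto simp: V orth_proj_in subspace_add inner_diff_left inner_add_left)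
next
  fix c x
  show "orth_proj V (c *\<^sub>R x) = c *\<^sub>R orth_proj V x"
    using orth_proj_orthogonal[of _ x]
    by (intro orth_proj_unique) (auto simp: V orth_proj_in subspace_scale inner_diff_left)
qed

lemma orth_proj_self_adjoint: "orth_proj V x \<bullet> z = x \<bullet> orth_proj V z"
proof -
  have "orth_proj V x \<bullet> z = orth_proj V x \<bullet> orth_proj V z"
    using orth_proj_orthogonal[OF orth_proj_in, of z x]
    by (simp add: inner_diff_left inner_diff_right inner_commute)
  also have "\<dots> = x \<bullet> orth_proj V z"
    using orth_proj_orthogonal[OF orth_proj_in, of x z] by (simp add: inner_diff_left)
  finally show ?thesis .
qed

end

lemma transpose_eq_if_self_adjoint:
  fixes M :: "real^'n^'n"
  assumes "\<And>x y. (M *v x) \<bullet> y = x \<bullet> (M *v y)"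
  shows "transpose M = M"
proof -
  have "adjoint ((*v) M) = (*v) M" using assms by (intro adjoint_unique) auto
  then show ?thesis
    using matrix_adjoint[of "(*v) M"] by simp
qed

definition Penrose :: "real^'d^'m \<Rightarrow> real^'m^'d \<Rightarrow> bool" where
  "Penrose A X \<longleftrightarrow> A ** X ** A = A \<and> X ** A ** X = X \<and>
     transpose (A ** X) = A ** X \<and> transpose (X ** A) = X ** A"

lemma Penrose_unique:
  assumes X: "Penrose A X" and Y: "Penrose A Y"
  shows "X = Y"
proof -
  have X1: "A ** X ** A = A" and X2: "X ** A ** X = X" and X3: "transpose (A ** X) = A ** X"
    and X4: "transpose (X ** A) = X ** A"
    using X by (auto simp: Penrose_def)
  have Y1: "A ** Y ** A = A" and Y2: "Y ** A ** Y = Y" and Y3: "transpose (A ** Y) = A ** Y"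
    and Y4: "transpose (Y ** A) = Y ** A"
    using Y by (auto simp: Penrose_def)
  have AX: "A ** X = A ** Y"
  proof -
    have "A ** X = transpose X ** transpose A"
      by (metis X3 matrix_transpose_mul)
    also have "\<dots> = transpose X ** (transpose A ** transpose Y) ** transpose A"
      by (metis Y1 matrix_transpose_mul matrix_mul_assoc)
    also have "\<dots> = (A ** X) ** (A ** Y)"
      by (metis X3 Y3 matrix_transpose_mul matrix_mul_assoc)
    also have "\<dots> = A ** Y" by (metis X1 matrix_mul_assoc)
    finally show ?thesis .
  qed
  have XA: "X ** A = Y ** A"
  proof -
    have "X ** A = transpose A ** transpose X"
      by (metis X4 matrix_transpose_mul)
    also have "\<dots> = transpose A ** (transpose Y ** transpose A ** transpose X)"
      by (metis Y1 matrix_transpose_mul matrix_mul_assoc)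
    also have "\<dots> = (Y ** A) ** (X ** A)"
      by (metis X4 Y4 matrix_transpose_mul matrix_mul_assoc)
    also have "\<dots> = Y ** A" by (metis X1 matrix_mul_assoc)
    finally show ?thesis .
  qed
  have "X = X ** A ** Y" by (metis AX X2 matrix_mul_assoc)
  also have "\<dots> = Y" by (metis XA Y2)
  finally show ?thesis .
qed

lemma Penrose_exists:
  fixes A :: "real^'d^'m"
  shows "\<exists>X. Penrose A X"
proof -
  \<comment> \<open>X inverts A on its row space R, after projecting onto its column space C\<close>
  define C where "C = range ((*v) A)"
  define R where "R = range ((*v) (transpose A))"
  have C: "subspace C" and R: "subspace R"
    unfolding C_def R_def
    by (rule linear_subspace_image[OF matrix_vector_mul_linear subspace_UNIV])+
  have A_orth_R: "A *v x = 0" if "\<And>w. w \<in> R \<Longrightarrow> x \<bullet> w = 0" for x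
  proof -
    have "(A *v x) \<bullet> (A *v x) = x \<bullet> (transpose A *v (A *v x))"
      by (simp add: dot_lmul_matrix inner_commute[of x])
    also have "\<dots> = 0" using that by (simp add: R_def)
    finally show ?thesis by simp
  qed
  have A_proj_R: "A *v orth_proj R x = A *v x" for x
    using A_orth_R[OF orth_proj_orthogonal[OF R]] by (simp add: matrix_vector_mult_diff_distrib)
  have "inj_on ((*v) A) R"
  proof
    fix x1 x2 assume "x1 \<in> R" "x2 \<in> R" and eq: "A *v x1 = A *v x2"
    have "(x1 - x2) \<bullet> w = 0" if "w \<in> R" for w
    proof -
      obtain z where "w = transpose A *v z" using \<open>w \<in> R\<close> by (auto simp: R_def)
      then show ?thesis
        using eq
        by (simp add: dot_lmul_matrix inner_commute[of "x1 - x2"] matrix_vector_mult_diff_distrib)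
    qed
    moreover have "x1 - x2 \<in> R" using R \<open>x1 \<in> R\<close> \<open>x2 \<in> R\<close> by (simp add: subspace_diff)
    ultimately show "x1 = x2" by (metis inner_eq_zero_iff right_minus_eq)
  qed
  then obtain g where g_R: "range g \<subseteq> R" and "linear g" and g_A: "\<And>x. x \<in> R \<Longrightarrow> g (A *v x) = x"
    using linear_exists_left_inverse_on[OF matrix_vector_mul_linear R] by blast
  have gA: "g (A *v x) = orth_proj R x" for x
    by (metis A_proj_R g_A orth_proj_in[OF R])
  define X where "X = matrix (g \<circ> orth_proj C)"
  have X: "X *v y = g (orth_proj C y)" for y
    unfolding X_def using \<open>linear g\<close> linear_orth_proj[OF C]
    by (simp add: matrix_works linear_compose)
  have AX: "A *v (X *v y) = orth_proj C y" for y
  proof -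
    obtain x where "orth_proj C y = A *v x" using orth_proj_in[OF C] by (auto simp: C_def)
    then show ?thesis by (simp add: X gA A_proj_R)
  qed
  have A_C: "A *v x \<in> C" for x by (simp add: C_def)
  have XA: "X *v (A *v x) = orth_proj R x" for x
    by (simp add: X gA orth_proj_id[OF C A_C])
  have "A ** X ** A = A"
    by (simp add: matrix_eq AX orth_proj_id[OF C A_C] flip: matrix_vector_mul_assoc)
  moreover have "X ** A ** X = X"
  proof -
    have "X *v y \<in> R" for y using g_R by (auto simp: X)
    then show ?thesis by (simp add: matrix_eq XA orth_proj_id[OF R] flip: matrix_vector_mul_assoc)
  qed
  moreover have "transpose (A ** X) = A ** X" "transpose (X ** A) = X ** A"
    by (simp_all add: transpose_eq_if_self_adjoint AX XA orth_proj_self_adjoint C R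
        flip: matrix_vector_mul_assoc)
  ultimately show ?thesis by (auto simp: Penrose_def)
qed

lemma Penrose_pinv: "Penrose A (pinv A)"
proof -
  have "\<exists>!X. Penrose A X" using Penrose_exists Penrose_unique by blast
  then show ?thesis unfolding pinv_def Penrose_def[symmetric] by (rule theI')
qed

lemma projA_symmetric: "transpose (projA A) = projA A"
  using Penrose_pinv[of A] by (simp add: Penrose_def projA_def)

lemma projA_idempotent: "projA A ** projA A = projA A"
  using Penrose_pinv[of A] by (simp add: Penrose_def projA_def matrix_mul_assoc)

lemma projA_self_adjoint: "(projA A *v x) \<bullet> y = x \<bullet> (projA A *v y)"
  by (metis dot_lmul_matrix projA_symmetric transpose_matrix_vector)

lemma sqnormA_eq_norm: "sqnormA A u = (norm (projA A *v u))\<^sup>2"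
  by (simp add: sqnormA_def power2_norm_eq_inner projA_self_adjoint matrix_vector_mul_assoc
      projA_idempotent)

lemma sqnormA_nonneg: "0 \<le> sqnormA A u"
  by (simp add: sqnormA_eq_norm)

lemma sqnormA_le_norm: "sqnormA A u \<le> (norm u)\<^sup>2"
proof -
  let ?Pu = "projA A *v u"
  have "?Pu \<bullet> (u - ?Pu) = 0"
    using projA_self_adjoint[of A u ?Pu]
    by (simp add: inner_diff_right matrix_vector_mul_assoc projA_idempotent inner_commute)
  then have "(norm u)\<^sup>2 = sqnormA A u + (norm (u - ?Pu))\<^sup>2"
    using norm_add_Pythagorean[of ?Pu "u - ?Pu"] by (simp add: orthogonal_def sqnormA_eq_norm)
  then show ?thesis by simp
qed

lemma sqnormA_add: "sqnormA A (a + b) = sqnormA A a + 2 * (a \<bullet> (projA A *v b)) + sqnormA A b"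
  using projA_self_adjoint[of A b a]
  by (simp add: sqnormA_def inner_add_left inner_add_right matrix_vector_right_distrib
      inner_commute)

lemma sqnormA_scaleR: "sqnormA A (c *\<^sub>R a) = c\<^sup>2 * sqnormA A a"
  by (simp add: sqnormA_def matrix_vector_mult_scaleR power2_eq_square)

lemma sqnormA_minus_commute: "sqnormA A (a - b) = sqnormA A (b - a)"
  using sqnormA_scaleR[of A "-1" "a - b"] by simp

lemma convex_sqnormA: "convex_on UNIV (sqnormA A)"
proof (rule convex_onI)
  fix t :: real and a b
  assume "0 < t" "t < 1"
  then have "0 \<le> (1 - t) * t * sqnormA A (a - b)"
    by (intro mult_nonneg_nonneg) (auto simp: sqnormA_nonneg)
  moreover have "sqnormA A (a - b) = sqnormA A a - 2 * (a \<bullet> (projA A *v b)) + sqnormA A b"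
    using sqnormA_add[of A a "- b"]
    by (simp add: sqnormA_def linear_neg[OF matrix_vector_mul_linear])
  ultimately show "sqnormA A ((1 - t) *\<^sub>R a + t *\<^sub>R b) \<le> (1 - t) * sqnormA A a + t * sqnormA A b"
    unfolding sqnormA_add sqnormA_scaleR
    by (simp add: algebra_simps power2_eq_square)
qed simp

lemma Rcoef_eq_sqnormA: "Rcoef A i = sqnormA A (axis i 1)"
  by (simp add: Rcoef_def sqnormA_def)

lemma Rcoef_nonneg: "0 \<le> Rcoef A i"
  by (simp add: Rcoef_eq_sqnormA sqnormA_nonneg)

lemma projA_component: "(projA A *v a) $ i = a \<bullet> (projA A *v axis i 1)"
proof -
  have "(projA A *v a) $ i = (projA A *v a) \<bullet> axis i 1" by (simp add: inner_axis)
  also have "\<dots> = a \<bullet> (projA A *v axis i 1)" by (rule projA_self_adjoint)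
  finally show ?thesis .
qed

lemma projA_axis_if_Rcoef_one:
  assumes "Rcoef A i = 1"
  shows "projA A *v axis i 1 = axis i 1"
proof -
  let ?e = "axis i (1::real)" and ?P = "projA A"
  have "(norm (?e - ?P *v ?e))\<^sup>2
      = ?e \<bullet> ?e - ?e \<bullet> (?P *v ?e) - (?P *v ?e) \<bullet> ?e + (?P *v ?e) \<bullet> (?P *v ?e)"
    by (simp add: power2_norm_eq_inner inner_diff_left inner_diff_right)
  also have "\<dots> = 1 - Rcoef A i"
    using sqnormA_eq_norm[of A ?e] projA_self_adjoint[of A ?e ?e]
    by (simp add: Rcoef_def sqnormA_def inner_axis_axis power2_norm_eq_inner)
  finally show ?thesis using assms by simp
qed

section \<open>The proximal operator on the real line\<close>

lemma convex_on_real_lower_bound: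
  fixes g :: "real \<Rightarrow> real"
  assumes g: "convex_on UNIV g"
  obtains c where "\<And>v. g z - c * \<bar>v - z\<bar> \<le> g v"
proof
  let ?c = "\<bar>g z - g (z - 1)\<bar> + \<bar>g (z + 1) - g z\<bar>"
  have slope: "(g x - g t) / (x - t) \<le> (g t - g y) / (t - y)" if "x < t" "t < y" for x t y
    using convex_on_slope_le[OF g UNIV_I UNIV_I that] by (rule order_trans)
  fix v
  consider "z < v" | "v < z" | "v = z" by linarith
  then show "g z - ?c * \<bar>v - z\<bar> \<le> g v"
  proof cases
    case 1
    then have "(v - z) * (g z - g (z - 1)) \<le> g v - g z"
      using slope[of "z - 1" z v] by (simp add: le_divide_eq algebra_simps)
    moreover have "(v - z) * (- ?c) \<le> (v - z) * (g z - g (z - 1))"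
      using 1 abs_ge_minus_self[of "g z - g (z - 1)"] abs_ge_zero[of "g (z + 1) - g z"]
      by (intro mult_left_mono) linarith+
    ultimately show ?thesis using 1 by (simp add: algebra_simps)
  next
    case 2
    have "(g v - g z) / (v - z) = (g z - g v) / (z - v)"
      by (metis minus_diff_eq minus_divide_divide)
    then have "g z - g v \<le> (z - v) * (g (z + 1) - g z)"
      using slope[of v z "z + 1"] 2 by (simp add: pos_divide_le_eq mult.commute)
    moreover have "(z - v) * (g (z + 1) - g z) \<le> (z - v) * ?c"
      using 2 abs_ge_self[of "g (z + 1) - g z"] abs_ge_zero[of "g z - g (z - 1)"]
      by (intro mult_left_mono) linarith+
    ultimately show ?thesis using 2 by (simp add: algebra_simps)
  qed simp
qed

definition prox_objective :: "real \<Rightarrow> (real \<Rightarrow> real) \<Rightarrow> real \<Rightarrow> real \<Rightarrow> real" where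
  "prox_objective eta g z v = 1 / (2 * eta) * (v - z)\<^sup>2 + g v"

lemma prox_eq_The: "prox eta g z = (THE u. \<forall>v. prox_objective eta g z u \<le> prox_objective eta g z v)"
  by (simp add: prox_def prox_objective_def)

context
  fixes g :: "real \<Rightarrow> real" and eta :: real
  assumes g: "convex_on UNIV g" and eta: "0 < eta"
begin

lemma prox_objective_has_minimizer: "\<exists>u. \<forall>v. prox_objective eta g z u \<le> prox_objective eta g z v"
proof -
  obtain c where c: "\<And>v. g z - c * \<bar>v - z\<bar> \<le> g v"
    using convex_on_real_lower_bound[OF g] by blast
  define K where "K = \<bar>2 * eta * c\<bar>"
  have "continuous_on {z - K..z + K} (prox_objective eta g z)"
    unfolding prox_objective_def
    by (intro continuous_intros continuous_on_subset[OF convex_on_continuous[OF open_UNIV g]]) auto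
  moreover have "{z - K..z + K} \<noteq> {}" by (simp add: K_def)
  ultimately obtain u
    where u: "\<And>v. v \<in> {z - K..z + K} \<Longrightarrow> prox_objective eta g z u \<le> prox_objective eta g z v"
    using continuous_attains_inf[OF compact_Icc] by blast
  have "prox_objective eta g z u \<le> prox_objective eta g z v" for v
  proof (cases "\<bar>v - z\<bar> \<le> K")
    case True
    then show ?thesis using u by (simp add: abs_le_iff)
  next
    case False
    \<comment> \<open>far from z the quadratic term dominates the linear lower bound for g\<close>
    have "c * \<bar>v - z\<bar> \<le> K / (2 * eta) * \<bar>v - z\<bar>"
      using eta by (intro mult_right_mono) (auto simp: K_def abs_mult)
    also have "\<dots> \<le> \<bar>v - z\<bar> / (2 * eta) * \<bar>v - z\<bar>"
      using False eta by (intro mult_right_mono divide_right_mono) auto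
    finally have "c * \<bar>v - z\<bar> \<le> (v - z)\<^sup>2 / (2 * eta)"
      by (simp add: power2_eq_square)
    then have "prox_objective eta g z z \<le> prox_objective eta g z v"
      using c[of v] by (simp add: prox_objective_def)
    moreover have "prox_objective eta g z u \<le> prox_objective eta g z z"
      using u K_def by simp
    ultimately show ?thesis by linarith
  qed
  then show ?thesis by blast
qed

lemma prox_objective_minimizer_optimality:
  assumes u: "\<forall>v. prox_objective eta g z u \<le> prox_objective eta g z v"
  shows "g u - (t - u) * (u - z) / eta \<le> g t"
proof (rule field_le_epsilon)
  fix e :: real assume "0 < e"
  define d where "d = t - u"
  define q where "q = d\<^sup>2 / (2 * eta)"
  define s where "s = min 1 (e / (q + 1))"
  have "0 \<le> q" using eta by (simp add: q_def)
  then have "0 < s" "s \<le> 1" using \<open>0 < e\<close> by (auto simp: s_def)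
  have "s * q \<le> e"
  proof -
    have "s * q \<le> e / (q + 1) * q" using \<open>0 \<le> q\<close> by (intro mult_right_mono) (auto simp: s_def)
    also have "\<dots> \<le> e" using \<open>0 \<le> q\<close> \<open>0 < e\<close> by (simp add: field_simps)
    finally show ?thesis .
  qed
  have seg: "(1 - s) * u + s * t = u + s * d" by (simp add: d_def algebra_simps)
  have "1 / (2 * eta) * (u - z)\<^sup>2 + g u \<le> 1 / (2 * eta) * (u + s * d - z)\<^sup>2 + g (u + s * d)"
    using u by (simp add: prox_objective_def)
  moreover have "1 / (2 * eta) * (u + s * d - z)\<^sup>2
      = 1 / (2 * eta) * (u - z)\<^sup>2 + 1 / (2 * eta) * (2 * s * d * (u - z) + s\<^sup>2 * d\<^sup>2)"
    using eta by (simp add: power2_eq_square field_simps)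
  moreover have "g (u + s * d) \<le> (1 - s) * g u + s * g t"
    using convex_onD[OF g, of s u t] \<open>0 < s\<close> \<open>s \<le> 1\<close> seg by simp
  ultimately have "0 \<le> 1 / (2 * eta) * (2 * s * d * (u - z) + s\<^sup>2 * d\<^sup>2) + s * (g t - g u)"
    by (simp add: algebra_simps)
  also have "\<dots> = s * (d * (u - z) / eta + s * q + g t - g u)"
    using eta by (simp add: q_def field_simps power2_eq_square)
  finally have "0 \<le> s * (d * (u - z) / eta + s * q + g t - g u)" .
  then have "g u - d * (u - z) / eta \<le> g t + s * q"
    using \<open>0 < s\<close> by (simp add: zero_le_mult_iff)
  then show "g u - (t - u) * (u - z) / eta \<le> g t + e"
    using \<open>s * q \<le> e\<close> by (simp add: d_def)
qed

lemma prox_eq_minimizer: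
  assumes u: "\<forall>v. prox_objective eta g z u \<le> prox_objective eta g z v"
  shows "prox eta g z = u"
  unfolding prox_eq_The
proof (rule the_equality)
  fix w assume w: "\<forall>v. prox_objective eta g z w \<le> prox_objective eta g z v"
  have "g u - (w - u) * (u - z) / eta \<le> g w" "g w - (u - w) * (w - z) / eta \<le> g u"
    using prox_objective_minimizer_optimality[OF u] prox_objective_minimizer_optimality[OF w]
    by auto
  then have "0 \<le> ((w - u) * (u - z) + (u - w) * (w - z)) / eta"
    unfolding add_divide_distrib by linarith
  also have "(w - u) * (u - z) + (u - w) * (w - z) = - (w - u)\<^sup>2"
    by (simp add: power2_eq_square algebra_simps)
  finally have "(w - u)\<^sup>2 / eta \<le> 0" by simp
  then show "w = u" using eta by (simp add: divide_le_0_iff)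
qed (rule u)

lemma prox_optimality: "g (prox eta g z) - (t - prox eta g z) * (prox eta g z - z) / eta \<le> g t"
proof -
  obtain u where "\<forall>v. prox_objective eta g z u \<le> prox_objective eta g z v"
    using prox_objective_has_minimizer by blast
  with prox_eq_minimizer prox_objective_minimizer_optimality show ?thesis by simp
qed

end

lemma prox_zero: "0 < eta \<Longrightarrow> prox eta (\<lambda>_. 0) z = z"
  by (rule prox_eq_minimizer) (auto simp: prox_objective_def convex_on_const)

section \<open>Coordinate smoothness\<close>

lemma has_real_derivative_along_axis:
  fixes f :: "real^'d \<Rightarrow> real"
  assumes "\<And>x. (f has_derivative (\<lambda>h. gradf x \<bullet> h)) (at x)"
  shows "((\<lambda>s. f (y + s *\<^sub>R axis i 1)) has_real_derivative gradf (y + s *\<^sub>R axis i 1) $ i) (at s)"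
proof -
  have "((\<lambda>s. y + s *\<^sub>R axis i (1::real)) has_derivative (\<lambda>h. h *\<^sub>R axis i 1)) (at s)"
    by (auto intro!: derivative_eq_intros)
  from has_derivative_compose[OF this assms]
  show ?thesis by (simp add: has_field_derivative_def inner_axis mult_commute_abs)
qed

lemma coordinate_descent_bound:
  fixes f :: "real^'d \<Rightarrow> real"
  assumes diff: "\<And>x. (f has_derivative (\<lambda>h. gradf x \<bullet> h)) (at x)"
    and smooth: "\<And>x h. \<bar>gradf (x + h *\<^sub>R axis i 1) $ i - gradf x $ i\<bar> \<le> M * \<bar>h\<bar>"
  shows "f (y + h *\<^sub>R axis i 1) \<le> f y + h * gradf y $ i + M / 2 * h\<^sup>2"
proof -
  define phi where "phi s = f (y + s *\<^sub>R axis i 1) - s * gradf y $ i - M / 2 * s\<^sup>2" for s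
  define dphi where "dphi s = gradf (y + s *\<^sub>R axis i 1) $ i - gradf y $ i - M * s" for s
  have der: "(phi has_real_derivative dphi s) (at s)" for s
    unfolding phi_def dphi_def
    by (rule derivative_eq_intros has_real_derivative_along_axis[OF diff] | simp)+
  have dphi_sign: "0 \<le> s \<Longrightarrow> dphi s \<le> 0" "s \<le> 0 \<Longrightarrow> 0 \<le> dphi s" for s
    using smooth[of y s] by (auto simp: dphi_def abs_le_iff)
  have "phi h \<le> phi 0"
  proof (cases h "0::real" rule: linorder_cases)
    case less
    then obtain s where "h < s" "s < 0" and eq: "phi 0 - phi h = (0 - h) * dphi s"
      using MVT2[OF less, of phi dphi] der by blast
    then have "0 \<le> (0 - h) * dphi s"
      using mult_nonpos_nonneg[of h "dphi s"] dphi_sign(2)[of s] less by simp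
    then show ?thesis using eq by simp
  next
    case greater
    then obtain s where "0 < s" "s < h" and eq: "phi h - phi 0 = (h - 0) * dphi s"
      using MVT2[OF greater, of phi dphi] der by blast
    then have "(h - 0) * dphi s \<le> 0" using dphi_sign(1)[of s] greater
      by (simp add: mult_nonneg_nonpos)
    then show ?thesis using eq by simp
  qed simp
  then show ?thesis by (simp add: phi_def)
qed

lemma rel_strong_convexity_le_smoothness:
  fixes A :: "real^'d^'m" and f :: "real^'d \<Rightarrow> real" and sigma M :: real
  assumes diff: "\<And>x. (f has_derivative (\<lambda>h. gradf x \<bullet> h)) (at x)"
    and rel_sc: "\<And>x y. gradf y \<bullet> (projA A *v (x - y)) + sigma / 2 * sqnormA A (x - y) \<le> f x - f y"
    and smooth: "\<And>x h. \<bar>gradf (x + h *\<^sub>R axis i 1) $ i - gradf x $ i\<bar> \<le> M * \<bar>h\<bar>"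
  shows "sigma * Rcoef A i \<le> M"
proof (rule ccontr)
  assume "\<not> sigma * Rcoef A i \<le> M"
  then have k: "0 < (sigma * Rcoef A i - M) / 2" by simp
  define k where "k = (sigma * Rcoef A i - M) / 2"
  define c where "c = gradf 0 \<bullet> (projA A *v axis i 1) - gradf 0 $ i"
  \<comment> \<open>compare the lower and upper bounds for f (h e_i) - f 0\<close>
  have quadratic_nonpos: "h * c + h\<^sup>2 * k \<le> 0" for h
  proof -
    have "h * (gradf 0 \<bullet> (projA A *v axis i 1)) + sigma / 2 * (h\<^sup>2 * Rcoef A i)
        \<le> h * gradf 0 $ i + M / 2 * h\<^sup>2"
      using rel_sc[where x = "h *\<^sub>R axis i 1" and y = 0]
        coordinate_descent_bound[OF diff smooth, of 0 h]
      by (simp add: sqnormA_scaleR Rcoef_eq_sqnormA matrix_vector_mult_scaleR)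
    then show ?thesis by (simp add: c_def k_def field_simps)
  qed
  define h where "h = (\<bar>c\<bar> + 1) / k"
  have "0 < h" and "h * k = \<bar>c\<bar> + 1" using k by (simp_all add: h_def k_def)
  then have "0 < h * (c + h * k)" by (simp add: add_pos_nonneg abs_ge_minus_self)
  then show False using quadratic_nonpos[of h] by (simp add: power2_eq_square algebra_simps)
qed

section \<open>Convex combinations with the epigraph\<close>

definition epigraph_mix :: "(real \<Rightarrow> real) \<Rightarrow> real \<Rightarrow> real \<Rightarrow> real \<times> real \<Rightarrow> bool" where
  "epigraph_mix g r v xh \<longleftrightarrow> (\<exists>q \<in> epigraph UNIV g. xh = r *\<^sub>R (v, g v) + (1 - r) *\<^sub>R q)"

lemma epigraph_mix_graph: "epigraph_mix g r v (v, g v)"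
  unfolding epigraph_mix_def
  by (rule bexI[of _ "(v, g v)"]) (auto simp: mem_epigraph scaleR_prod_def algebra_simps)

lemma epigraph_mix_le:
  assumes g: "convex_on UNIV g" and "0 \<le> r" "r \<le> 1" and "epigraph_mix g r v (x, h)"
  shows "g x \<le> h"
proof -
  obtain q where "q \<in> epigraph UNIV g" and xh: "(x, h) = r *\<^sub>R (v, g v) + (1 - r) *\<^sub>R q"
    using assms(4) by (auto simp: epigraph_mix_def)
  moreover have "(v, g v) \<in> epigraph UNIV g" by (simp add: mem_epigraph)
  ultimately have "(x, h) \<in> epigraph UNIV g"
    unfolding xh using \<open>0 \<le> r\<close> \<open>r \<le> 1\<close> by (intro convexD[OF convex_epigraphI[OF g]]) auto
  then show ?thesis by (simp add: mem_epigraph)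
qed

lemma epigraph_mix_step:
  assumes g: "convex_on UNIV g" and "r \<le> 1" and "0 \<le> a" and "0 \<le> a * r + c" and "a + c = 1 - r"
    and "epigraph_mix g r v xh"
  shows "epigraph_mix g r v' (a *\<^sub>R xh + c *\<^sub>R (v, g v) + r *\<^sub>R (v', g v'))"
proof -
  obtain q where q: "q \<in> epigraph UNIV g" and xh: "xh = r *\<^sub>R (v, g v) + (1 - r) *\<^sub>R q"
    using assms(6) by (auto simp: epigraph_mix_def)
  have v: "(v, g v) \<in> epigraph UNIV g" by (simp add: mem_epigraph)
  have split: "a *\<^sub>R xh + c *\<^sub>R (v, g v) = (a * r + c) *\<^sub>R (v, g v) + (a * (1 - r)) *\<^sub>R q"
    by (simp add: xh algebra_simps)
  show ?thesis
  proof (cases "r = 1")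
    case True
    have "a * r + c = 0" "a * (1 - r) = 0" using True \<open>a + c = 1 - r\<close> by simp_all
    then have "a *\<^sub>R xh + c *\<^sub>R (v, g v) = 0" unfolding split by (simp del: scaleR_Pair)
    then show ?thesis unfolding True using epigraph_mix_graph[of g 1 v'] by simp
  next
    case False
    \<comment> \<open>rescale the epigraph part by 1/(1 - r): its two weights then sum to 1\<close>
    define q' where "q' = ((a * r + c) / (1 - r)) *\<^sub>R (v, g v) + a *\<^sub>R q"
    have "q' \<in> epigraph UNIV g"
      unfolding q'_def using \<open>r \<le> 1\<close> False \<open>a + c = 1 - r\<close> assms(3,4)
      by (intro convexD[OF convex_epigraphI[OF g] v q]) (auto simp: field_simps)
    moreover have "a *\<^sub>R xh + c *\<^sub>R (v, g v) = (1 - r) *\<^sub>R q'"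
      using False unfolding split q'_def scaleR_right_distrib scaleR_scaleR
      by (simp del: scaleR_Pair add: ac_simps)
    ultimately show ?thesis
      unfolding epigraph_mix_def by (metis add.commute)
  qed
qed

section \<open>Expectation over sample paths\<close>

lemma expect_path_0 [simp]: "expect_path p 0 g = g []"
  by (simp add: expect_path_def)

lemma sum_lists_length_Suc:
  "(\<Sum>is | length is = Suc n. F is)
    = (\<Sum>i\<in>UNIV. \<Sum>is | length is = n. F (i # (is :: 'a::finite list)))"
proof -
  have lists: "{is. length is = Suc n} = (\<lambda>(i, is). i # is) ` (UNIV \<times> {is. length is = n})"
    by (auto simp: length_Suc_conv)
  have inj: "inj_on (\<lambda>(i, is). i # is) (UNIV \<times> {is :: 'a list. length is = n})"
    by (auto simp: inj_on_def)
  show ?thesis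
    unfolding lists sum.reindex[OF inj] sum.cartesian_product by (simp add: case_prod_beta)
qed

lemma expect_path_Suc:
  "expect_path p (Suc n) g = (\<Sum>i\<in>UNIV. p i * expect_path p n (\<lambda>is. g (i # is)))"
  by (simp add: expect_path_def sum_lists_length_Suc sum_distrib_left mult.assoc)

lemma expect_path_add: "expect_path p n (\<lambda>is. g is + k is) = expect_path p n g + expect_path p n k"
  by (simp add: expect_path_def sum.distrib algebra_simps)

lemma expect_path_diff: "expect_path p n (\<lambda>is. g is - k is) = expect_path p n g - expect_path p n k"
  by (simp add: expect_path_def sum_subtractf algebra_simps)

lemma expect_path_cmult: "expect_path p n (\<lambda>is. c * g is) = c * expect_path p n g"
  by (simp add: expect_path_def sum_distrib_left algebra_simps)

lemma expect_path_const:
  assumes "(\<Sum>i\<in>UNIV. p i) = 1"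
  shows "expect_path p n (\<lambda>_. c) = c"
  by (induction n) (simp_all add: expect_path_Suc assms flip: sum_distrib_right)

lemma expect_path_mono:
  assumes "\<And>i. 0 \<le> p i" and "\<And>is. length is = n \<Longrightarrow> g is \<le> k is"
  shows "expect_path p n g \<le> expect_path p n k"
  unfolding expect_path_def
  using assms by (intro sum_mono mult_left_mono) (auto intro!: prod_list_nonneg)

lemma fold_invariant:
  assumes "\<And>i s. I s \<Longrightarrow> I (step i s)" and "I s"
  shows "I (fold step is s)"
  using assms(2) by (induction "is" arbitrary: s) (auto intro: assms(1))

lemma expect_path_fold_le:
  assumes p: "\<And>i. 0 \<le> p i" and "0 \<le> c"
    and inv: "\<And>i s. I s \<Longrightarrow> I (step i s)"
    and decrease: "\<And>s. I s \<Longrightarrow> (\<Sum>i\<in>UNIV. p i * V (step i s)) \<le> c * V s"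
    and "I s"
  shows "expect_path p n (\<lambda>is. V (fold step is s)) \<le> c ^ n * V s"
  using \<open>I s\<close>
proof (induction n arbitrary: s)
  case (Suc n)
  have "expect_path p (Suc n) (\<lambda>is. V (fold step is s))
      = (\<Sum>i\<in>UNIV. p i * expect_path p n (\<lambda>is. V (fold step is (step i s))))"
    by (simp add: expect_path_Suc)
  also have "\<dots> \<le> (\<Sum>i\<in>UNIV. p i * (c ^ n * V (step i s)))"
    using Suc inv p by (intro sum_mono mult_left_mono) auto
  also have "\<dots> = c ^ n * (\<Sum>i\<in>UNIV. p i * V (step i s))"
    by (simp add: sum_distrib_left algebra_simps)
  also have "\<dots> \<le> c ^ n * (c * V s)"
    using decrease[OF Suc.prems] \<open>0 \<le> c\<close> by (intro mult_left_mono) auto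
  finally show ?case by (simp add: algebra_simps)
qed simp

section \<open>APCG with constant parameters\<close>

type_synonym 'd apcg_state = "(real, 'd) vec \<times> (real, 'd) vec \<times> ('d \<Rightarrow> real)"

locale apcg_constant =
  fixes A :: "real^'d::finite^'m::finite"
    and f :: "real^'d \<Rightarrow> real" and gradf :: "real^'d \<Rightarrow> real^'d"
    and psi :: "'d \<Rightarrow> real \<Rightarrow> real"
    and p M :: "'d \<Rightarrow> real"
    and sigma rho :: real and theta :: "real^'d"
  assumes diff: "\<And>x. (f has_derivative (\<lambda>h. gradf x \<bullet> h)) (at x)"
    and rel_sc: "\<And>x y. gradf y \<bullet> (projA A *v (x - y)) + sigma / 2 * sqnormA A (x - y) \<le> f x - f y"
    and smooth: "\<And>i x h. \<bar>gradf (x + h *\<^sub>R axis i 1) $ i - gradf x $ i\<bar> \<le> M i * \<bar>h\<bar>"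
    and psi_convex: "\<And>i. convex_on UNIV (psi i)"
    and R_or_zero: "\<And>i. Rcoef A i = 1 \<or> psi i = (\<lambda>_. 0)"
    and p_pos: "\<And>i. 0 < p i"
    and p_sum: "(\<Sum>i\<in>UNIV. p i) = 1"
    and sigma_pos: "0 < sigma"
    and rho_pos: "0 < rho" and rho_less_1: "rho < 1"
    and rho_bound: "\<And>i. rho\<^sup>2 * M i * Rcoef A i \<le> sigma * (p i)\<^sup>2"
begin

text \<open>The theorem is the instance rho = sqrt sigma / S.\<close>

lemma rho_Rcoef_le: "rho * Rcoef A i \<le> p i"
proof -
  have "sigma * (rho * Rcoef A i)\<^sup>2 = rho\<^sup>2 * Rcoef A i * (sigma * Rcoef A i)"
    by (simp add: power2_eq_square)
  also have "\<dots> \<le> rho\<^sup>2 * Rcoef A i * M i"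
    using rel_strong_convexity_le_smoothness[OF diff rel_sc smooth] Rcoef_nonneg
    by (intro mult_left_mono mult_nonneg_nonneg) auto
  also have "\<dots> \<le> sigma * (p i)\<^sup>2" using rho_bound[of i] by (simp add: ac_simps)
  finally have "(rho * Rcoef A i)\<^sup>2 \<le> (p i)\<^sup>2" using sigma_pos by simp
  then show ?thesis using p_pos[of i] by (simp add: power2_le_iff_abs_le)
qed

lemma rho_le_p: "psi j \<noteq> (\<lambda>_. 0) \<Longrightarrow> rho \<le> p j"
  using rho_Rcoef_le[of j] R_or_zero[of j] by simp

lemma p_le_1: "p j \<le> 1"
  using member_le_sum[of j UNIV p] p_pos p_sum by (simp add: less_imp_le)

definition y_of :: "real^'d \<Rightarrow> real^'d \<Rightarrow> real^'d" where
  "y_of x v = (1 / (1 + rho)) *\<^sub>R (x + rho *\<^sub>R v)"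

definition w_of :: "real^'d \<Rightarrow> real^'d \<Rightarrow> real^'d" where
  "w_of x v = (1 - rho) *\<^sub>R v + rho *\<^sub>R y_of x v"

definition eta :: "'d \<Rightarrow> real" where
  "eta i = rho / (sigma * p i)"

definition u_of :: "real^'d \<Rightarrow> real^'d \<Rightarrow> 'd \<Rightarrow> real" where
  "u_of x v i = prox (eta i) (psi i) (w_of x v $ i - eta i * gradf (y_of x v) $ i)"

definition v_next :: "real^'d \<Rightarrow> real^'d \<Rightarrow> 'd \<Rightarrow> real^'d" where
  "v_next x v i = (\<chi> j. if j = i then u_of x v i else w_of x v $ j)"

definition x_next :: "real^'d \<Rightarrow> real^'d \<Rightarrow> 'd \<Rightarrow> real^'d" where
  "x_next x v i = y_of x v + (rho * Rcoef A i / p i) *\<^sub>R (v_next x v i - w_of x v)"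

lemma apcg_step_eq:
  "apcg_step A gradf psi p (\<lambda>_. rho) (\<lambda>_. rho) (\<lambda>k. inverse ((1 - rho) ^ k))
     (\<lambda>k. sigma * inverse ((1 - rho) ^ k)) t i (x, v) = (x_next x v i, v_next x v i)"
proof -
  have y: "(1 / (1 - rho * rho)) *\<^sub>R ((1 - rho) *\<^sub>R x + (rho * (1 - rho)) *\<^sub>R v) = y_of x v"
  proof -
    have "(1 - rho) *\<^sub>R x + (rho * (1 - rho)) *\<^sub>R v = (1 - rho) *\<^sub>R (x + rho *\<^sub>R v)"
      by (simp add: algebra_simps)
    moreover have "1 / (1 - rho * rho) * (1 - rho) = 1 / (1 + rho)"
    proof -
      have "rho * rho < 1" using mult_strict_left_mono[OF rho_less_1 rho_pos] rho_less_1 by simp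
      then show ?thesis using rho_pos by (simp add: field_simps square_diff_one_factored)
    qed
    ultimately show ?thesis by (metis scaleR_scaleR y_of_def)
  qed
  have eta: "(inverse ((1 - rho) ^ Suc t) - inverse ((1 - rho) ^ t)) /
      (sigma * inverse ((1 - rho) ^ Suc t) * p i) = eta i"
    using rho_less_1 sigma_pos p_pos[of i] by (simp add: eta_def field_simps)
  show ?thesis
    unfolding apcg_step_def Let_def fst_conv snd_conv y eta
    by (simp add: x_next_def v_next_def u_of_def w_of_def coord_grad_def vec_eq_iff axis_def)
qed

lemma one_plus_rho_neq_0: "1 + rho \<noteq> 0"
  using rho_pos by simp

lemma p_neq_0: "p j \<noteq> 0"
  using p_pos[of j] by simp

lemma y_of_component: "y_of x v $ j = (x $ j + rho * v $ j) / (1 + rho)"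
  by (simp add: y_of_def)

lemma w_of_component: "w_of x v $ j = (v $ j + rho * x $ j) / (1 + rho)"
proof -
  have "w_of x v $ j = (1 - rho) * v $ j + rho * ((x $ j + rho * v $ j) / (1 + rho))"
    by (simp add: w_of_def y_of_component)
  also have "\<dots> = (v $ j + rho * x $ j) / (1 + rho)"
    using one_plus_rho_neq_0 by (simp add: field_simps)
  finally show ?thesis .
qed

lemma v_next_eq: "v_next x v i = w_of x v + (u_of x v i - w_of x v $ i) *\<^sub>R axis i 1"
  by (simp add: v_next_def vec_eq_iff axis_def)

text \<open>cx and cv are the coefficients of x_j and v_j in y_j - (rho / p_j) w_j, so that the new x_j
  is an affine combination of x_j, v_j and the new v_j (x_next_component).  Since cv j <= 0,
  this combination is not convex, which is why the invariant below keeps (x_j, h_j)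
  as a mixture of (v_j, psi_j v_j) and a point of the epigraph.\<close>

definition cx :: "'d \<Rightarrow> real" where
  "cx j = (1 - rho\<^sup>2 / p j) / (1 + rho)"

definition cv :: "'d \<Rightarrow> real" where
  "cv j = rho * (1 - 1 / p j) / (1 + rho)"

lemma y_minus_w_component: "y_of x v $ j - rho / p j * w_of x v $ j = cx j * x $ j + cv j * v $ j"
  using one_plus_rho_neq_0 p_neq_0[of j]
  by (simp add: y_of_component w_of_component cx_def cv_def divide_simps)
    (simp add: algebra_simps power2_eq_square)

lemma x_next_component:
  assumes "psi j \<noteq> (\<lambda>_. 0)"
  shows "x_next x v i $ j = cx j * x $ j + cv j * v $ j + rho / p j * v_next x v i $ j"
proof -
  have "x_next x v i $ j = y_of x v $ j + rho / p j * (v_next x v i $ j - w_of x v $ j)"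
    using R_or_zero[of j] assms by (cases "j = i") (auto simp: x_next_def v_next_def)
  then show ?thesis using y_minus_w_component[of x v j] by (simp add: algebra_simps)
qed

lemma cx_cv_weights:
  assumes "psi j \<noteq> (\<lambda>_. 0)"
  shows "0 \<le> cx j" and "0 \<le> cx j * (rho / p j) + cv j" and "cx j + cv j = 1 - rho / p j"
proof -
  have rp: "rho \<le> p j" and p: "0 < p j" using rho_le_p[OF assms] p_pos[of j] by auto
  have "rho\<^sup>2 \<le> rho" using rho_pos rho_less_1 by (simp add: power2_eq_square mult_left_le)
  then have "rho\<^sup>2 \<le> p j" using rp by linarith
  then show "0 \<le> cx j" using rho_pos p by (simp add: cx_def)
  have "cx j * (rho / p j) + cv j = rho / (1 + rho) * (1 - (rho / p j)\<^sup>2)"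
    using one_plus_rho_neq_0 p_neq_0[of j]
    by (simp add: cx_def cv_def divide_simps) (simp add: algebra_simps power2_eq_square)
  moreover have "(rho / p j)\<^sup>2 \<le> 1" using rp rho_pos p by (simp add: power_le_one)
  ultimately show "0 \<le> cx j * (rho / p j) + cv j" using rho_pos by simp
  show "cx j + cv j = 1 - rho / p j"
    using one_plus_rho_neq_0 p_neq_0[of j]
    by (simp add: cx_def cv_def divide_simps) (simp add: algebra_simps power2_eq_square)
qed

definition h_next :: "real^'d \<Rightarrow> real^'d \<Rightarrow> ('d \<Rightarrow> real) \<Rightarrow> 'd \<Rightarrow> 'd \<Rightarrow> real" where
  "h_next x v h i j = cx j * h j + cv j * psi j (v $ j) + rho / p j * psi j (v_next x v i $ j)"

definition step :: "'d \<Rightarrow> 'd apcg_state \<Rightarrow> 'd apcg_state" where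
  "step i s = (case s of (x, v, h) \<Rightarrow> (x_next x v i, v_next x v i, h_next x v h i))"

lemma apcg_run_eq:
  "apcg_run A gradf psi p (\<lambda>_. rho) (\<lambda>_. rho) (\<lambda>k. inverse ((1 - rho) ^ k))
     (\<lambda>k. sigma * inverse ((1 - rho) ^ k)) t (x, v) is
   = (fst (fold step is (x, v, h)), fst (snd (fold step is (x, v, h))))"
  by (induction "is" arbitrary: t x v h) (simp_all add: apcg_step_eq step_def)

definition admissible :: "'d apcg_state \<Rightarrow> bool" where
  "admissible s \<longleftrightarrow> (case s of (x, v, h) \<Rightarrow> \<forall>j.
     if psi j = (\<lambda>_. 0) then h j = 0 else epigraph_mix (psi j) (rho / p j) (v $ j) (x $ j, h j))"

lemma admissible_init: "admissible (0, 0, \<lambda>j. psi j 0)"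
  using epigraph_mix_graph by (simp add: admissible_def)

lemma admissible_epigraph_mix:
  assumes "admissible (x, v, h)" and "psi j \<noteq> (\<lambda>_. 0)"
  shows "epigraph_mix (psi j) (rho / p j) (v $ j) (x $ j, h j)"
  using assms by (auto simp: admissible_def dest: spec[of _ j])

lemma rho_div_p_le_1: "psi j \<noteq> (\<lambda>_. 0) \<Longrightarrow> rho / p j \<le> 1"
  using rho_le_p p_pos[of j] by simp

lemma admissible_psi_le:
  assumes "admissible (x, v, h)"
  shows "psi j (x $ j) \<le> h j"
proof (cases "psi j = (\<lambda>_. 0)")
  case False
  have "0 \<le> rho / p j" using rho_pos p_pos[of j] by simp
  with admissible_epigraph_mix[OF assms False] show ?thesis
    by (intro epigraph_mix_le[OF psi_convex _ rho_div_p_le_1[OF False]])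
qed (use assms in \<open>auto simp: admissible_def dest: spec[of _ j]\<close>)

lemma admissible_step:
  assumes "admissible s"
  shows "admissible (step i s)"
proof -
  obtain x v h where s: "s = (x, v, h)" by (cases s) auto
  have "epigraph_mix (psi j) (rho / p j) (v_next x v i $ j) (x_next x v i $ j, h_next x v h i j)"
    if "psi j \<noteq> (\<lambda>_. 0)" for j
  proof -
    have "(x_next x v i $ j, h_next x v h i j)
        = cx j *\<^sub>R (x $ j, h j) + cv j *\<^sub>R (v $ j, psi j (v $ j))
          + (rho / p j) *\<^sub>R (v_next x v i $ j, psi j (v_next x v i $ j))"
      using x_next_component[OF that] by (simp add: h_next_def)
    then show ?thesis
      using epigraph_mix_step[OF psi_convex rho_div_p_le_1[OF that] cx_cv_weights[OF that]
          admissible_epigraph_mix[OF assms[unfolded s] that]] by simp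
  qed
  then show ?thesis using assms by (auto simp: admissible_def s step_def h_next_def)
qed

lemma sqnormA_v_next:
  "sqnormA A (v_next x v i - theta) = sqnormA A (w_of x v - theta)
     + 2 * (u_of x v i - w_of x v $ i) * (projA A *v (w_of x v - theta)) $ i
     + (u_of x v i - w_of x v $ i)\<^sup>2 * Rcoef A i"
proof -
  have v_next:
    "v_next x v i - theta = (w_of x v - theta) + (u_of x v i - w_of x v $ i) *\<^sub>R axis i 1"
    by (simp add: v_next_eq)
  show ?thesis
    unfolding v_next sqnormA_add sqnormA_scaleR
    by (simp add: matrix_vector_mult_scaleR projA_component Rcoef_eq_sqnormA)
qed

lemma f_x_next_le:
  "f (x_next x v i) \<le> f (y_of x v)
     + (rho * Rcoef A i / p i * (u_of x v i - w_of x v $ i)) * gradf (y_of x v) $ i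
     + M i / 2 * (rho * Rcoef A i / p i * (u_of x v i - w_of x v $ i))\<^sup>2"
proof -
  have x_next: "x_next x v i
      = y_of x v + (rho * Rcoef A i / p i * (u_of x v i - w_of x v $ i)) *\<^sub>R axis i 1"
    by (simp add: x_next_def v_next_eq)
  show ?thesis unfolding x_next by (rule coordinate_descent_bound[OF diff smooth])
qed

lemma sqnormA_w_le:
  "sqnormA A (w_of x v - theta)
    \<le> (1 - rho) * sqnormA A (v - theta) + rho * sqnormA A (y_of x v - theta)"
proof -
  have "w_of x v - theta = (1 - rho) *\<^sub>R (v - theta) + rho *\<^sub>R (y_of x v - theta)"
    by (simp add: w_of_def algebra_simps)
  then show ?thesis
    using convex_onD[OF convex_sqnormA, of rho "v - theta" "y_of x v - theta"] rho_pos rho_less_1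
    by simp
qed

lemma f_y_le:
  "f (y_of x v) \<le> (1 - rho) * f x + rho * f theta
     + rho * (gradf (y_of x v) \<bullet> (projA A *v (w_of x v - theta)))
     - rho * sigma / 2 * sqnormA A (y_of x v - theta)"
proof -
  define y where "y = y_of x v"
  define L where "L u = gradf y \<bullet> (projA A *v u)" for u
  have L_lin: "L (a *\<^sub>R u + b *\<^sub>R z) = a * L u + b * L z" for a b u z
    by (simp add: L_def matrix_vector_right_distrib matrix_vector_mult_scaleR inner_add_right)
  \<comment> \<open>(1 - rho) x + rho theta - y = rho (theta - w): the two first-order terms combine\<close>
  have "(1 - rho) *\<^sub>R (x - y) + rho *\<^sub>R (theta - y) = (- rho) *\<^sub>R (w_of x v - theta) + 0 *\<^sub>R theta"
    using one_plus_rho_neq_0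
    by (simp add: vec_eq_iff y_def y_of_component w_of_component field_simps)
  from arg_cong[OF this, of L]
  have cancel: "(1 - rho) * L (x - y) + rho * L (theta - y) = - rho * L (w_of x v - theta)"
    unfolding L_lin by simp
  have "0 \<le> sigma / 2 * sqnormA A (x - y)" using sigma_pos by (simp add: sqnormA_nonneg)
  then have "L (x - y) \<le> f x - f y" using rel_sc[of y x] by (simp add: L_def)
  then have "(1 - rho) * L (x - y) \<le> (1 - rho) * (f x - f y)"
    using rho_less_1 by (intro mult_left_mono) auto
  moreover have "rho * (L (theta - y) + sigma / 2 * sqnormA A (y - theta)) \<le> rho * (f theta - f y)"
    using rel_sc[of y theta] rho_pos
    by (intro mult_left_mono) (auto simp: L_def sqnormA_minus_commute)
  ultimately show ?thesis
    using cancel unfolding y_def[symmetric] L_def[symmetric] by (simp add: algebra_simps)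
qed

lemma eta_pos: "0 < eta i"
  using rho_pos sigma_pos p_pos[of i] by (simp add: eta_def)

lemma coordinate_bound_free:
  fixes x v :: "real^'d" and i :: 'd
  defines "d \<equiv> u_of x v i - w_of x v $ i" and "E \<equiv> (projA A *v (w_of x v - theta)) $ i"
    and "G \<equiv> gradf (y_of x v) $ i" and "tau \<equiv> rho * Rcoef A i / p i"
  assumes "psi i = (\<lambda>_. 0)"
  shows "p i * (sigma * (2 * d * E + d\<^sup>2 * Rcoef A i) + 2 * (tau * d * G + M i / 2 * (tau * d)\<^sup>2))
      + 2 * rho * (G * E) \<le> 0"
proof -
  have d: "d = - (eta i * G)"
    using assms(5) by (simp add: d_def G_def u_of_def prox_zero[OF eta_pos])
  have "M i * tau * eta i = rho\<^sup>2 * M i * Rcoef A i / (sigma * (p i)\<^sup>2)"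
    by (simp add: tau_def eta_def power2_eq_square ac_simps)
  also have "\<dots> \<le> 1" using rho_bound[of i] sigma_pos p_pos[of i] by simp
  finally have "0 \<le> 1 - M i * tau * eta i" by simp
  moreover have
    "p i * (sigma * (2 * d * E + d\<^sup>2 * Rcoef A i) + 2 * (tau * d * G + M i / 2 * (tau * d)\<^sup>2))
      + 2 * rho * (G * E) = - (rho * Rcoef A i * eta i * G\<^sup>2 * (1 - M i * tau * eta i))"
    using sigma_pos p_pos[of i] unfolding d
    by (simp add: tau_def eta_def field_simps power2_eq_square)
  ultimately show ?thesis
    using rho_pos Rcoef_nonneg[of A i] eta_pos[of i] by simp
qed

lemma coordinate_bound_prox:
  fixes x v :: "real^'d" and i :: 'd
  defines "d \<equiv> u_of x v i - w_of x v $ i" and "E \<equiv> (projA A *v (w_of x v - theta)) $ i"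
    and "G \<equiv> gradf (y_of x v) $ i" and "tau \<equiv> rho * Rcoef A i / p i"
  assumes R: "Rcoef A i = 1"
  shows "p i * (sigma * (2 * d * E + d\<^sup>2 * Rcoef A i) + 2 * (tau * d * G + M i / 2 * (tau * d)\<^sup>2))
      + 2 * rho * (G * E) \<le> 2 * rho * (psi i (theta $ i) - psi i (u_of x v i))"
proof -
  define s where "s = p i * sigma"
  define z where "z = w_of x v $ i - eta i * G"
  have E: "E = w_of x v $ i - theta $ i"
    using projA_axis_if_Rcoef_one[OF R] by (simp add: E_def projA_component inner_axis)
  have "psi i (u_of x v i) - (theta $ i - u_of x v i) * (u_of x v i - z) / eta i
      \<le> psi i (theta $ i)"
    using prox_optimality[OF psi_convex eta_pos] by (simp add: u_of_def z_def G_def)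
  moreover have "(theta $ i - u_of x v i) * (u_of x v i - z) / eta i
      = - ((E + d) * (s * d + rho * G) / rho)"
    using rho_pos sigma_pos p_pos[of i]
    by (simp add: E d_def z_def s_def eta_def field_simps)
  ultimately have "(E + d) * (s * d + rho * G) / rho \<le> psi i (theta $ i) - psi i (u_of x v i)"
    by linarith
  then have "(E + d) * (s * d + rho * G) \<le> rho * (psi i (theta $ i) - psi i (u_of x v i))"
    using rho_pos by (simp add: pos_divide_le_eq mult.commute)
  moreover have "M i * tau * rho \<le> s"
    using rho_bound[of i] p_pos[of i] R by (simp add: tau_def s_def power2_eq_square field_simps)
  then have "0 \<le> (s - M i * tau * rho) * d\<^sup>2" by simp
  moreover have
    "p i * (sigma * (2 * d * E + d\<^sup>2 * Rcoef A i) + 2 * (tau * d * G + M i / 2 * (tau * d)\<^sup>2))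
      + 2 * rho * (G * E) = 2 * ((E + d) * (s * d + rho * G)) - (s - M i * tau * rho) * d\<^sup>2"
    using R p_pos[of i] by (simp add: tau_def s_def field_simps power2_eq_square)
  ultimately show ?thesis by linarith
qed


lemma coordinate_bound:
  fixes x v :: "real^'d" and i :: 'd
  defines "d \<equiv> u_of x v i - w_of x v $ i" and "E \<equiv> (projA A *v (w_of x v - theta)) $ i"
    and "G \<equiv> gradf (y_of x v) $ i" and "tau \<equiv> rho * Rcoef A i / p i"
  shows "p i * (sigma * (2 * d * E + d\<^sup>2 * Rcoef A i) + 2 * (tau * d * G + M i / 2 * (tau * d)\<^sup>2))
      + 2 * rho * (G * E) \<le> 2 * rho * (psi i (theta $ i) - psi i (u_of x v i))"
  using R_or_zero[of i] coordinate_bound_prox[of i x v] coordinate_bound_free[of i x v]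
  unfolding assms by auto

definition lyap :: "'d apcg_state \<Rightarrow> real" where
  "lyap s = (case s of (x, v, h) \<Rightarrow>
     sigma * sqnormA A (v - theta) + 2 * (f x + (\<Sum>j\<in>UNIV. h j) - Fobj f psi theta))"

lemma lyap_ge:
  assumes "admissible (x, v, h)"
  shows "sigma * sqnormA A (v - theta) + 2 * (Fobj f psi x - Fobj f psi theta) \<le> lyap (x, v, h)"
  using sum_mono[of UNIV "\<lambda>j. psi j (x $ j)" h] admissible_psi_le[OF assms]
  by (simp add: lyap_def Fobj_def)

lemma lyap_step_le:
  "p i * lyap (step i (x, v, h))
      + 2 * rho * (gradf (y_of x v) $ i * (projA A *v (w_of x v - theta)) $ i)
   \<le> p i * (sigma * sqnormA A (w_of x v - theta)
        + 2 * (f (y_of x v) + (\<Sum>j\<in>UNIV. h_next x v h i j) - Fobj f psi theta))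
     + 2 * rho * (psi i (theta $ i) - psi i (u_of x v i))"
proof -
  define d where "d = u_of x v i - w_of x v $ i"
  define E where "E = (projA A *v (w_of x v - theta)) $ i"
  define G where "G = gradf (y_of x v) $ i"
  define tau where "tau = rho * Rcoef A i / p i"
  define B where "B = sigma * sqnormA A (w_of x v - theta)
    + 2 * (f (y_of x v) + (\<Sum>j\<in>UNIV. h_next x v h i j) - Fobj f psi theta)"
  define T where
    "T = sigma * (2 * d * E + d\<^sup>2 * Rcoef A i) + 2 * (tau * d * G + M i / 2 * (tau * d)\<^sup>2)"
  have "f (x_next x v i) \<le> f (y_of x v) + (tau * d * G + M i / 2 * (tau * d)\<^sup>2)"
    unfolding d_def G_def tau_def using f_x_next_le by (simp add: add.assoc)
  moreover have "sigma * sqnormA A (v_next x v i - theta)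
      = sigma * sqnormA A (w_of x v - theta) + sigma * (2 * d * E + d\<^sup>2 * Rcoef A i)"
    by (simp add: sqnormA_v_next d_def E_def algebra_simps)
  ultimately have "lyap (step i (x, v, h)) \<le> B + T"
    by (simp add: lyap_def step_def B_def T_def)
  then have "p i * lyap (step i (x, v, h)) \<le> p i * B + p i * T"
    using mult_left_mono[of _ "B + T" "p i"] p_pos[of i] by (simp add: distrib_left)
  then show ?thesis
    using coordinate_bound[of i x v] unfolding B_def T_def d_def E_def G_def tau_def by linarith
qed


lemma sum_p_h_next:
  "(\<Sum>i\<in>UNIV. p i * h_next x v h i j) = cx j * h j + cv j * psi j (v $ j)
     + (rho / p j - rho) * psi j (w_of x v $ j) + rho * psi j (u_of x v j)"
proof -
  define C where "C = cx j * h j + cv j * psi j (v $ j) + rho / p j * psi j (w_of x v $ j)"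
  define D where "D = rho / p j * (psi j (u_of x v j) - psi j (w_of x v $ j))"
  have "p i * h_next x v h i j = p i * C + (if i = j then p j * D else 0)" for i
    by (auto simp: h_next_def v_next_def C_def D_def algebra_simps)
  then have "(\<Sum>i\<in>UNIV. p i * h_next x v h i j) = C + p j * D"
    by (simp add: sum.distrib p_sum flip: sum_distrib_right)
  then show ?thesis
    using p_neq_0[of j] by (simp add: C_def D_def algebra_simps)
qed

lemma psi_w_le:
  assumes "admissible (x, v, h)"
  shows "psi j (w_of x v $ j) \<le> (psi j (v $ j) + rho * h j) / (1 + rho)"
proof -
  define t where "t = rho / (1 + rho)"
  have "0 \<le> t" "t \<le> 1" using rho_pos by (auto simp: t_def)
  have "w_of x v $ j = (1 - t) * v $ j + t * x $ j"
    using one_plus_rho_neq_0 by (simp add: w_of_component t_def divide_simps)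
  then have "psi j (w_of x v $ j) \<le> (1 - t) * psi j (v $ j) + t * psi j (x $ j)"
    using convex_onD[OF psi_convex \<open>0 \<le> t\<close> \<open>t \<le> 1\<close>] by simp
  also have "\<dots> \<le> (1 - t) * psi j (v $ j) + t * h j"
    using admissible_psi_le[OF assms] \<open>0 \<le> t\<close> by (simp add: mult_left_mono)
  also have "\<dots> = (psi j (v $ j) + rho * h j) / (1 + rho)"
    using one_plus_rho_neq_0 by (simp add: t_def divide_simps)
  finally show ?thesis .
qed

lemma expected_h_next:
  assumes "admissible (x, v, h)"
  shows "(\<Sum>i\<in>UNIV. p i * h_next x v h i j) \<le> (1 - rho) * h j + rho * psi j (u_of x v j)"
proof (cases "psi j = (\<lambda>_. 0)")
  case True
  then have "h j = 0" using assms by (auto simp: admissible_def dest: spec[of _ j])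
  with True show ?thesis by (simp add: sum_p_h_next)
next
  case False
  have "0 \<le> rho / p j - rho" using rho_pos p_pos[of j] p_le_1[of j] by (simp add: field_simps)
  then have "(rho / p j - rho) * psi j (w_of x v $ j)
      \<le> (rho / p j - rho) * ((psi j (v $ j) + rho * h j) / (1 + rho))"
    by (rule mult_left_mono[OF psi_w_le[OF assms]])
  \<comment> \<open>the coefficients of psi (v j) cancel and those of h j add up to 1 - rho\<close>
  moreover have "cx j * h j + cv j * psi j (v $ j)
      + (rho / p j - rho) * ((psi j (v $ j) + rho * h j) / (1 + rho))
      = (1 - rho) * h j"
    using one_plus_rho_neq_0 p_neq_0[of j]
    by (simp add: cx_def cv_def divide_simps) (simp add: algebra_simps power2_eq_square)
  ultimately show ?thesis by (simp add: sum_p_h_next)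
qed

lemma sum_p_h_next_swap:
  "(\<Sum>i\<in>UNIV. p i * (\<Sum>j\<in>UNIV. h_next x v h i j)) = (\<Sum>j\<in>UNIV. \<Sum>i\<in>UNIV. p i * h_next x v h i j)"
  unfolding sum_distrib_left by (rule sum.swap)

lemma lyap_expected_decrease:
  assumes "admissible (x, v, h)"
  shows "(\<Sum>i\<in>UNIV. p i * lyap (step i (x, v, h))) \<le> (1 - rho) * lyap (x, v, h)"
proof -
  define y where "y = y_of x v"
  define w where "w = w_of x v"
  define Fs where "Fs = Fobj f psi theta"
  define K where "K = sigma * sqnormA A (w - theta) + 2 * (f y - Fs)"
  define Gw where "Gw = gradf y \<bullet> (projA A *v (w - theta))"
  define H where "H = (\<Sum>j\<in>UNIV. \<Sum>i\<in>UNIV. p i * h_next x v h i j)"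
  define SU where "SU = (\<Sum>j\<in>UNIV. psi j (u_of x v j))"
  define ST where "ST = (\<Sum>j\<in>UNIV. psi j (theta $ j))"
  have "(\<Sum>i\<in>UNIV. p i * lyap (step i (x, v, h))) + 2 * rho * Gw
      = (\<Sum>i\<in>UNIV. p i * lyap (step i (x, v, h))
          + 2 * rho * (gradf y $ i * (projA A *v (w - theta)) $ i))"
    by (simp add: Gw_def inner_vec_def sum.distrib sum_distrib_left)
  also have "\<dots> \<le> (\<Sum>i\<in>UNIV. p i * (sigma * sqnormA A (w - theta)
            + 2 * (f y + (\<Sum>j\<in>UNIV. h_next x v h i j) - Fs))
          + 2 * rho * (psi i (theta $ i) - psi i (u_of x v i)))"
    unfolding y_def w_def Fs_def by (rule sum_mono) (rule lyap_step_le)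
  also have "\<dots> = (\<Sum>i\<in>UNIV. p i * K + 2 * (p i * (\<Sum>j\<in>UNIV. h_next x v h i j))
          + 2 * rho * psi i (theta $ i) - 2 * rho * psi i (u_of x v i))"
    by (rule sum.cong) (simp_all add: K_def algebra_simps)
  also have "\<dots> = K + 2 * H + 2 * rho * ST - 2 * rho * SU"
    by (simp add: sum.distrib sum_subtractf H_def ST_def SU_def sum_p_h_next_swap
        flip: sum_distrib_left sum_distrib_right) (simp add: p_sum)
  finally have "(\<Sum>i\<in>UNIV. p i * lyap (step i (x, v, h))) + 2 * rho * Gw
      \<le> K + 2 * H + 2 * rho * ST - 2 * rho * SU" .
  moreover have "lyap (x, v, h) = sigma * sqnormA A (v - theta) + 2 * (f x + (\<Sum>j\<in>UNIV. h j) - Fs)"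
    by (simp add: lyap_def Fs_def)
  then have "(1 - rho) * lyap (x, v, h)
      = (1 - rho) * (sigma * sqnormA A (v - theta)) + (1 - rho) * (2 * (f x + (\<Sum>j\<in>UNIV. h j) - Fs))"
    by (simp add: distrib_left)
  moreover have "H \<le> (1 - rho) * (\<Sum>j\<in>UNIV. h j) + rho * SU"
    unfolding H_def SU_def
    by (simp add: sum_mono expected_h_next[OF assms] sum.distrib sum_distrib_left flip: sum.distrib)
  moreover have "Fs = f theta + ST" by (simp add: Fs_def ST_def Fobj_def)
  moreover have "sigma * sqnormA A (w - theta)
      \<le> sigma * ((1 - rho) * sqnormA A (v - theta) + rho * sqnormA A (y - theta))"
    using sqnormA_w_le[of x v] sigma_pos unfolding y_def w_def by (simp add: mult_left_mono)
  ultimately show ?thesis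
    using f_y_le[of x v] unfolding y_def[symmetric] w_def[symmetric] Gw_def[symmetric] K_def
    by (simp add: algebra_simps)
qed

lemma expected_error_bound:
  "sigma * expect_path p t (\<lambda>is. sqnormA A
      (snd (apcg_iter A gradf psi p (\<lambda>_. rho) (\<lambda>_. rho) (\<lambda>k. inverse ((1 - rho) ^ k))
             (\<lambda>k. sigma * inverse ((1 - rho) ^ k)) is) - theta))
   + 2 * (expect_path p t (\<lambda>is. Fobj f psi
      (fst (apcg_iter A gradf psi p (\<lambda>_. rho) (\<lambda>_. rho) (\<lambda>k. inverse ((1 - rho) ^ k))
             (\<lambda>k. sigma * inverse ((1 - rho) ^ k)) is))) - Fobj f psi theta)
   \<le> (sigma * (norm ((0::real^'d) - theta))\<^sup>2 + 2 * (Fobj f psi 0 - Fobj f psi theta))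
      * (1 - rho) ^ t"
proof -
  define s0 :: "'d apcg_state" where "s0 = (0, 0, \<lambda>j. psi j 0)"
  define X where "X is = fst (fold step is s0)" for "is"
  define V where "V is = fst (snd (fold step is s0))" for "is"
  have iter: "apcg_iter A gradf psi p (\<lambda>_. rho) (\<lambda>_. rho) (\<lambda>k. inverse ((1 - rho) ^ k))
      (\<lambda>k. sigma * inverse ((1 - rho) ^ k)) is = (X is, V is)" for "is"
    unfolding apcg_iter_def X_def V_def s0_def by (rule apcg_run_eq)
  have admissible: "admissible (fold step is s0)" for "is"
    using admissible_step admissible_init unfolding s0_def by (rule fold_invariant)
  have "sigma * expect_path p t (\<lambda>is. sqnormA A (V is - theta))
      + 2 * (expect_path p t (\<lambda>is. Fobj f psi (X is)) - Fobj f psi theta)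
      = expect_path p t (\<lambda>is.
          sigma * sqnormA A (V is - theta) + 2 * (Fobj f psi (X is) - Fobj f psi theta))"
    by (simp add: expect_path_add expect_path_diff expect_path_cmult expect_path_const p_sum)
  also have "\<dots> \<le> expect_path p t (\<lambda>is. lyap (fold step is s0))"
  proof (rule expect_path_mono)
    fix "is"
    show "sigma * sqnormA A (V is - theta) + 2 * (Fobj f psi (X is) - Fobj f psi theta)
        \<le> lyap (fold step is s0)"
      using lyap_ge[of "X is" "V is" "snd (snd (fold step is s0))"] admissible[of "is"]
      by (simp add: X_def V_def)
  qed (simp add: less_imp_le p_pos)
  also have "\<dots> \<le> (1 - rho) ^ t * lyap s0"
    using p_pos rho_less_1 admissible_step lyap_expected_decrease admissible_init unfolding s0_def
    by (intro expect_path_fold_le[where I = admissible]) (auto simp: less_imp_le)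
  also have "lyap s0
      \<le> sigma * (norm ((0::real^'d) - theta))\<^sup>2 + 2 * (Fobj f psi 0 - Fobj f psi theta)"
    using sqnormA_le_norm[of A "0 - theta"] sigma_pos by (simp add: s0_def lyap_def Fobj_def)
  finally show ?thesis
    using rho_less_1 by (simp add: iter mult.commute mult_left_mono)
qed

end

theorem corollary1:
  fixes A :: "real^'d::finite^'m::finite"
    and f :: "real^'d \<Rightarrow> real" and gradf :: "real^'d \<Rightarrow> real^'d"
    and psi :: "'d \<Rightarrow> real \<Rightarrow> real"
    and p M :: "'d \<Rightarrow> real"
    and sigma S :: real and theta :: "real^'d"
  assumes diff: "\<forall>x. (f has_derivative (\<lambda>h. gradf x \<bullet> h)) (at x)"
    and rel_sc: "\<forall>x y. f x - f y \<ge> gradf y \<bullet> (projA A *v (x - y)) + sigma / 2 * sqnormA A (x - y)"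
    and smooth: "\<forall>i x h. \<bar>gradf (x + h *\<^sub>R axis i 1) $ i - gradf x $ i\<bar> \<le> M i * \<bar>h\<bar>"
    and psi_convex: "\<forall>i. convex_on UNIV (psi i)"
    and R_or_zero: "\<forall>i. Rcoef A i = 1 \<or> psi i = (\<lambda>_. 0)"
    and p_pos: "\<forall>i. p i > 0"
    and p_sum: "(\<Sum>i\<in>UNIV. p i) = 1"
    and minimizer: "\<forall>x. Fobj f psi theta \<le> Fobj f psi x"
    and sigma_pos: "sigma > 0"
    and S_pos: "S > 0"
    and S_bound: "\<forall>i. S^2 \<ge> M i * Rcoef A i / (p i)^2"
    and rho_lt1: "sqrt sigma / S < 1"
  shows "(\<forall>i (t::nat). 1 - (sqrt sigma / S) * Rcoef A i / p i \<ge> 0) \<and>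
    (\<forall>t. sigma * expect_path p t (\<lambda>is. sqnormA A
            (snd (apcg_iter A gradf psi p (\<lambda>_. sqrt sigma / S) (\<lambda>_. sqrt sigma / S)
                   (\<lambda>k. inverse ((1 - sqrt sigma / S) ^ k))
                   (\<lambda>k. sigma * inverse ((1 - sqrt sigma / S) ^ k)) is) - theta))
        + 2 * (expect_path p t (\<lambda>is. Fobj f psi
            (fst (apcg_iter A gradf psi p (\<lambda>_. sqrt sigma / S) (\<lambda>_. sqrt sigma / S)
                   (\<lambda>k. inverse ((1 - sqrt sigma / S) ^ k))
                   (\<lambda>k. sigma * inverse ((1 - sqrt sigma / S) ^ k)) is)))
          - Fobj f psi theta)
      \<le> (sigma * (norm ((0::real^'d) - theta))^2 + 2 * 1 * (Fobj f psi 0 - Fobj f psi theta))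
          * (1 - sqrt sigma / S) ^ t)"
proof -
  let ?rho = "sqrt sigma / S"
  have rho_bound: "?rho\<^sup>2 * M i * Rcoef A i \<le> sigma * (p i)\<^sup>2" for i
  proof -
    have "M i * Rcoef A i \<le> S\<^sup>2 * (p i)\<^sup>2"
      using S_bound[rule_format, of i] p_pos[rule_format, of i] by (simp add: pos_divide_le_eq)
    then have "sigma * (M i * Rcoef A i) \<le> sigma * (S\<^sup>2 * (p i)\<^sup>2)"
      using sigma_pos by simp
    then show ?thesis using sigma_pos S_pos by (simp add: field_simps)
  qed
  interpret apcg_constant A f gradf psi p M sigma ?rho theta
    by unfold_locales
      (use diff rel_sc smooth psi_convex R_or_zero p_pos p_sum sigma_pos S_pos rho_lt1 rho_bound
        in auto)
  have "?rho * Rcoef A i / p i \<le> 1" for i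
    using rho_Rcoef_le[of i] p_pos[of i] by (subst pos_divide_le_eq) auto
  then show ?thesis using expected_error_bound by simp
qed

end
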